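(* Let $\mathcal{A}$ be a central, essential arrangement of hyperplanes in $\mathbb{R}^d$ and fix a chamber $c_0$. Then for chambers $c$, the set $L_1(c_0,c)$ determines $c$ uniquely. Moreover, fixing a minimal gallery $r_0$ from $c_0$ to $-c_0$, for minimal galleries $r$ from $c_0$ to $-c_0$ the set $L_2(r_0,r)$ determines $r$ uniquely.
   Context: A central, essential arrangement is a finite set of linear hyperplanes in $\mathbb{R}^d$ with common intersection $\{0\}$. Chambers are connected components of the complement of the union of the hyperplanes. $L_1(c,c')$ is the set of hyperplanes separating chambers $c,c'$. A minimal gallery from $c$ to $c'$ is a shortest path in the graph on chambers where $c,c'$ are adjacent iff $|L_1(c,c')|=1$; a minimal gallery from $c_0$ to $-c_0$ crosses every hyperplane exactly once. $L_2$ is the set of codimension-two subspaces arising as intersections of hyperplanes of $\mathcal{A}$. For minimal galleries $r,r'$ from $c_0$ to $-c_0$, $L_2(r,r')$ is the set of $X\in L_2$ such that $r$ and $r'$ cross the hyperplanes containing $X$ in different orders. *)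

theory Defs
  imports "HOL-Analysis.Analysis"
begin

definition linear_hyperplane :: "'a::euclidean_space set \<Rightarrow> bool" where
  "linear_hyperplane H \<longleftrightarrow> (\<exists>a. a \<noteq> 0 \<and> H = {x. a \<bullet> x = 0})"

definition central_essential_arrangement :: "'a::euclidean_space set set \<Rightarrow> bool" where
  "central_essential_arrangement A \<longleftrightarrow>
     finite A \<and> (\<forall>H\<in>A. linear_hyperplane H) \<and> \<Inter>A = {0}"

definition chambers :: "'a::euclidean_space set set \<Rightarrow> 'a set set" where
  "chambers A = components (- \<Union>A)"

definition separates :: "'a::euclidean_space set \<Rightarrow> 'a set \<Rightarrow> 'a set \<Rightarrow> bool" where
  "separates H c c' \<longleftrightarrow> (\<forall>x\<in>c. \<forall>y\<in>c'. \<not> connected_component (- H) x y)"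

definition L1 :: "'a::euclidean_space set set \<Rightarrow> 'a set \<Rightarrow> 'a set \<Rightarrow> 'a set set" where
  "L1 A c c' = {H \<in> A. separates H c c'}"

definition gallery :: "'a::euclidean_space set set \<Rightarrow> 'a set list \<Rightarrow> bool" where
  "gallery A g \<longleftrightarrow> g \<noteq> [] \<and> set g \<subseteq> chambers A \<and>
     (\<forall>i. Suc i < length g \<longrightarrow> card (L1 A (g ! i) (g ! Suc i)) = 1)"

definition gallery_from_to :: "'a::euclidean_space set set \<Rightarrow> 'a set \<Rightarrow> 'a set \<Rightarrow> 'a set list \<Rightarrow> bool" where
  "gallery_from_to A c c' g \<longleftrightarrow> gallery A g \<and> hd g = c \<and> last g = c'"

definition minimal_gallery :: "'a::euclidean_space set set \<Rightarrow> 'a set \<Rightarrow> 'a set \<Rightarrow> 'a set list \<Rightarrow> bool" where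
  "minimal_gallery A c c' g \<longleftrightarrow> gallery_from_to A c c' g \<and>
     (\<forall>g'. gallery_from_to A c c' g' \<longrightarrow> length g \<le> length g')"

definition L2 :: "'a::euclidean_space set set \<Rightarrow> 'a set set" where
  "L2 A = {X. (\<exists>S. S \<subseteq> A \<and> S \<noteq> {} \<and> X = \<Inter>S) \<and> dim X + 2 = DIM('a)}"

definition crosses_at :: "'a::euclidean_space set set \<Rightarrow> 'a set list \<Rightarrow> 'a set \<Rightarrow> nat \<Rightarrow> bool" where
  "crosses_at A r H i \<longleftrightarrow> Suc i < length r \<and> H \<in> L1 A (r ! i) (r ! Suc i)"

definition crosses_before :: "'a::euclidean_space set set \<Rightarrow> 'a set list \<Rightarrow> 'a set \<Rightarrow> 'a set \<Rightarrow> bool" where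
  "crosses_before A r H H' \<longleftrightarrow> (\<exists>i j. i < j \<and> crosses_at A r H i \<and> crosses_at A r H' j)"

definition L2_diff :: "'a::euclidean_space set set \<Rightarrow> 'a set list \<Rightarrow> 'a set list \<Rightarrow> 'a set set" where
  "L2_diff A r r' = {X \<in> L2 A. \<exists>H\<in>A. \<exists>H'\<in>A. X \<subseteq> H \<and> X \<subseteq> H' \<and>
      crosses_before A r H H' \<and> crosses_before A r' H' H}"

end

theory Submission
  imports Defs
begin

text \<open>Chambers are the cells of sign vectors with respect to the hyperplanes, and \<open>L1 A c0 c\<close> is
  the set of hyperplanes on which the sign vector of \<open>c\<close> differs from that of \<open>c0\<close>; hence it
  determines \<open>c\<close>. Each step of a gallery changes \<open>L1 A c0\<close> by one hyperplane, and a generic line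
  from \<open>c0\<close> towards \<open>-c0\<close> yields a gallery of length \<open>card A + 1\<close>; so a minimal gallery from \<open>c0\<close>
  to \<open>-c0\<close> crosses every hyperplane exactly once and is determined by the order of its crossings.
  If three hyperplanes share a codimension-two flat, their normals are linearly dependent, which
  forces one of them to be crossed between the other two by every such gallery. Hence two minimal
  galleries cross either all or none of the pairs of hyperplanes through a flat \<open>X \<in> L2 A\<close> in
  opposite orders, so \<open>L2_diff A r0 r\<close> records exactly the pairs that \<open>r\<close> orders differently from
  \<open>r0\<close>, which fixes the crossing order of \<open>r\<close> and thus \<open>r\<close>.\<close>

lemma connected_component_hyperplane_complement_iff:
  fixes a :: "'a::euclidean_space"
  assumes "a \<bullet> x \<noteq> 0" "a \<bullet> y \<noteq> 0"
  shows "connected_component (- {z. a \<bullet> z = 0}) x y \<longleftrightarrow> (a \<bullet> x > 0 \<longleftrightarrow> a \<bullet> y > 0)"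
proof
  assume "connected_component (- {z. a \<bullet> z = 0}) x y"
  then obtain T where T: "connected T" "T \<subseteq> - {z. a \<bullet> z = 0}" "x \<in> T" "y \<in> T"
    by (auto simp: connected_component_def)
  show "a \<bullet> x > 0 \<longleftrightarrow> a \<bullet> y > 0"
  proof (rule ccontr)
    assume "(a \<bullet> x > 0) \<noteq> (a \<bullet> y > 0)"
    then have "(a \<bullet> x \<le> 0 \<and> 0 \<le> a \<bullet> y) \<or> (a \<bullet> y \<le> 0 \<and> 0 \<le> a \<bullet> x)" by auto
    then obtain z where "z \<in> T" "a \<bullet> z = 0"
      using connected_ivt_hyperplane[OF T(1) T(3) T(4)] connected_ivt_hyperplane[OF T(1) T(4) T(3)]
      by blast
    with T(2) show False by auto
  qed
next
  assume same: "a \<bullet> x > 0 \<longleftrightarrow> a \<bullet> y > 0"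
  show "connected_component (- {z. a \<bullet> z = 0}) x y"
  proof (cases "a \<bullet> x > 0")
    case True
    then show ?thesis using same
      by (intro connected_componentI[of "{z. a \<bullet> z > 0}"])
         (auto intro!: convex_connected convex_halfspace_gt)
  next
    case False
    then show ?thesis using same assms
      by (intro connected_componentI[of "{z. a \<bullet> z < 0}"])
         (auto intro!: convex_connected convex_halfspace_lt)
  qed
qed

lemma open_avoids_finitely_many_hyperplanes:
  fixes S :: "'a::euclidean_space set"
  assumes "open S" "S \<noteq> {}" "finite N" "0 \<notin> N"
  obtains w where "w \<in> S" "\<And>b. b \<in> N \<Longrightarrow> b \<bullet> w \<noteq> 0"
proof -
  have "negligible (\<Union>b\<in>N. {v. b \<bullet> v = 0})"
    using assms(3,4) by (intro negligible_Union) (auto intro: negligible_hyperplane)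
  moreover have "\<not> negligible S"
    using open_not_negligible assms(1,2) by blast
  ultimately obtain w where "w \<in> S" "w \<notin> (\<Union>b\<in>N. {v. b \<bullet> v = 0})"
    using negligible_subset by blast
  then show ?thesis using that by blast
qed

lemma exists_threshold_with_card:
  fixes T :: "real set"
  assumes "finite T" "k \<le> card T"
  shows "\<exists>s. s \<notin> T \<and> card {x\<in>T. x < s} = k"
  using assms(2)
proof (induction k)
  case 0
  define s where "s = Min (insert 0 T) - 1"
  have "s < x" if "x \<in> T" for x
  proof -
    have "Min (insert 0 T) \<le> x" using that assms(1) by simp
    then show ?thesis by (simp add: s_def)
  qed
  then have "s \<notin> T" "{x\<in>T. x < s} = {}" by force+
  then show ?case by (metis card.empty)
next
  case (Suc k)
  then obtain s where s: "s \<notin> T" "card {x\<in>T. x < s} = k" by auto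
  have "{x\<in>T. s < x} \<noteq> {}"
  proof
    assume "{x\<in>T. s < x} = {}"
    then have "T = {x\<in>T. x < s}" using s(1) by (auto simp: not_less_iff_gr_or_eq)
    then show False using s(2) Suc.prems by simp
  qed
  \<comment> \<open>Move the threshold just past the next point y of T.\<close>
  define y where "y = Min {x\<in>T. s < x}"
  have y: "y \<in> T" "s < y" "\<And>x. x \<in> T \<Longrightarrow> s < x \<Longrightarrow> y \<le> x"
    using Min_in[of "{x\<in>T. s < x}"] \<open>{x\<in>T. s < x} \<noteq> {}\<close> assms(1) by (auto simp: y_def)
  define m where "m = Min (insert (y + 1) {x\<in>T. y < x})"
  have m: "y < m" "\<And>x. x \<in> T \<Longrightarrow> y < x \<Longrightarrow> m \<le> x"
    using assms(1) by (auto simp: m_def)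
  define s' where "s' = (y + m) / 2"
  have below: "x < s' \<longleftrightarrow> x < s \<or> x = y" if "x \<in> T" for x
    using that s(1) y m(1) m(2)[OF that] unfolding s'_def
    by (cases "x < s"; cases "x = y") force+
  have "s' \<notin> T"
  proof
    assume "s' \<in> T"
    moreover have "y < s'" "s' < m" using m(1) by (auto simp: s'_def)
    ultimately show False using m(2)[of s'] by simp
  qed
  moreover have "{x\<in>T. x < s'} = insert y {x\<in>T. x < s}" using below y(1) by blast
  ultimately show ?case using s(2) y(2) assms(1) by (intro exI[of _ s']) simp
qed

lemma subspace_linear_hyperplane: "linear_hyperplane H \<Longrightarrow> subspace H"
  by (auto simp: linear_hyperplane_def intro: subspace_hyperplane)

lemma dim_linear_hyperplane:
  "linear_hyperplane (H :: 'a::euclidean_space set) \<Longrightarrow> dim H = DIM('a) - 1"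
  by (auto simp: linear_hyperplane_def dim_hyperplane)

lemma dim_Int_linear_hyperplanes:
  fixes H H' :: "'a::euclidean_space set"
  assumes H: "linear_hyperplane H" and H': "linear_hyperplane H'" and "H \<noteq> H'"
  shows "dim (H \<inter> H') + 2 = DIM('a)"
proof -
  have sub: "subspace H" "subspace H'" "subspace (H \<inter> H')"
    using subspace_linear_hyperplane[OF H] subspace_linear_hyperplane[OF H'] by (auto intro: subspace_inter)
  have dims: "dim H = DIM('a) - 1" "dim H' = DIM('a) - 1"
    using dim_linear_hyperplane[OF H] dim_linear_hyperplane[OF H'] .
  have "dim (H \<inter> H') < dim H"
  proof (rule ccontr)
    assume "\<not> dim (H \<inter> H') < dim H"
    then have "H \<inter> H' = H" using subspace_dim_equal[OF sub(3,1)] by simp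
    then have "H \<subseteq> H'" by blast
    then have "H = H'" using subspace_dim_equal[OF sub(1,2)] dims by simp
    then show False using \<open>H \<noteq> H'\<close> by simp
  qed
  moreover have "dim {x + y |x y. x \<in> H \<and> y \<in> H'} + dim (H \<inter> H') = dim H + dim H'"
    by (rule dim_sums_Int[OF sub(1,2)])
  moreover have "dim {x + y |x y. x \<in> H \<and> y \<in> H'} \<le> DIM('a)"
    by (rule dim_subset_UNIV)
  moreover have "DIM('a) \<ge> 1" using DIM_positive[where 'a='a] by linarith
  ultimately show ?thesis using dims by linarith
qed

lemma normal_in_span_of_pencil:
  fixes a b c :: "'a::euclidean_space"
  assumes "\<And>z. a \<bullet> z = 0 \<Longrightarrow> b \<bullet> z = 0 \<Longrightarrow> c \<bullet> z = 0"
  obtains u v where "c = u *\<^sub>R a + v *\<^sub>R b"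
proof -
  obtain y z where y: "y \<in> span {a, b}" and z: "\<And>w. w \<in> span {a, b} \<Longrightarrow> orthogonal z w"
    and c: "c = y + z"
    using orthogonal_subspace_decomp_exists[of "{a, b}" c] by blast
  have "a \<bullet> z = 0" "b \<bullet> z = 0" "y \<bullet> z = 0"
    using z[of a] z[of b] z[OF y] by (auto simp: span_base orthogonal_def inner_commute)
  then have "z \<bullet> z = 0"
    using assms[of z] c by (simp add: inner_add_left)
  then have "c \<in> span {a, b}" using c y by simp
  then show ?thesis using that
    by (auto simp: span_insert span_singleton) (metis add.commute diff_add_cancel)
qed

text \<open>At a point where two linear forms have the same sign, so has their sum; whatever the signs
  at the base point \<open>x\<close>, this rules out the pattern required at one of \<open>p\<close>, \<open>q\<close>, \<open>s\<close>.\<close>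
lemma pencil_flip_patterns:
  fixes x1 x2 p1 p2 q1 q2 s1 s2 :: real
  defines "flip y z \<equiv> (0 < y) \<noteq> (0 < z)"
  assumes "x1 \<noteq> 0" "x2 \<noteq> 0" "x1 + x2 \<noteq> 0" "p1 \<noteq> 0" "p2 \<noteq> 0" "p1 + p2 \<noteq> 0"
    "q1 \<noteq> 0" "q2 \<noteq> 0" "q1 + q2 \<noteq> 0" "s1 \<noteq> 0" "s2 \<noteq> 0" "s1 + s2 \<noteq> 0"
    and "flip x1 p1 \<noteq> flip x2 p2" "flip x2 p2 = flip (x1 + x2) (p1 + p2)"
    and "flip x2 q2 \<noteq> flip x1 q1" "flip x1 q1 = flip (x1 + x2) (q1 + q2)"
    and "flip (x1 + x2) (s1 + s2) \<noteq> flip x1 s1" "flip x1 s1 = flip x2 s2"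
  shows False
  using assms(2-) unfolding flip_def by smt

lemma relative_order_with_same_middle:
  fixes a b c a' b' c' :: nat
  defines "strictly_between \<equiv> \<lambda>m x y. x < m \<and> m < y \<or> y < m \<and> m < x"
  assumes "strictly_between a b c \<and> strictly_between a' b' c' \<or> strictly_between b a c \<and> strictly_between b' a' c'
    \<or> strictly_between c a b \<and> strictly_between c' a' b'"
  shows "(a < b \<longleftrightarrow> a' < b') \<longleftrightarrow> (a < c \<longleftrightarrow> a' < c')"
  using assms(2) unfolding strictly_between_def by auto

locale linear_arrangement =
  fixes A :: "'a::euclidean_space set set"
  assumes finite_arrangement: "finite A"
    and linear_hyperplane_arrangement: "\<And>H. H \<in> A \<Longrightarrow> linear_hyperplane H"
begin

definition normal :: "'a set \<Rightarrow> 'a" where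
  "normal H = (SOME a. a \<noteq> 0 \<and> H = {x. a \<bullet> x = 0})"

lemma normal:
  assumes "H \<in> A"
  shows normal_nonzero: "normal H \<noteq> 0" and hyperplane_normal: "H = {x. normal H \<bullet> x = 0}"
proof -
  have "\<exists>a. a \<noteq> 0 \<and> H = {x. a \<bullet> x = 0}"
    using linear_hyperplane_arrangement[OF assms] by (simp add: linear_hyperplane_def)
  then have "normal H \<noteq> 0 \<and> H = {x. normal H \<bullet> x = 0}" unfolding normal_def by (rule someI_ex)
  then show "normal H \<noteq> 0" "H = {x. normal H \<bullet> x = 0}" by auto
qed

lemma mem_hyperplane_iff: "H \<in> A \<Longrightarrow> x \<in> H \<longleftrightarrow> normal H \<bullet> x = 0"
  using hyperplane_normal by blast

lemma not_in_arrangement_iff: "p \<notin> \<Union>A \<longleftrightarrow> (\<forall>H\<in>A. normal H \<bullet> p \<noteq> 0)"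
  using mem_hyperplane_iff by auto

text \<open>The orientation chosen by \<open>normal\<close> is arbitrary: only comparisons of \<open>side H\<close> at two
  points are meaningful.\<close>
definition side :: "'a set \<Rightarrow> 'a \<Rightarrow> bool" where
  "side H p \<longleftrightarrow> normal H \<bullet> p > 0"

lemma side_uminus: "H \<in> A \<Longrightarrow> p \<notin> \<Union>A \<Longrightarrow> side H (- p) \<longleftrightarrow> \<not> side H p"
  using not_in_arrangement_iff by (auto simp: side_def)

definition cell :: "'a \<Rightarrow> 'a set" where
  "cell p = {y. \<forall>H\<in>A. normal H \<bullet> y \<noteq> 0 \<and> side H y = side H p}"

lemma cell_self: "p \<notin> \<Union>A \<Longrightarrow> p \<in> cell p"
  unfolding cell_def using not_in_arrangement_iff by blast

lemma cell_subset: "cell p \<subseteq> - \<Union>A"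
  unfolding cell_def using not_in_arrangement_iff by blast

lemma cell_eq_if_mem: "q \<in> cell p \<Longrightarrow> cell q = cell p"
  by (auto simp: cell_def)

lemma cell_eqI: "(\<And>H. H \<in> A \<Longrightarrow> side H p = side H q) \<Longrightarrow> cell p = cell q"
  by (auto simp: cell_def)

lemma side_cell: "q \<in> cell p \<Longrightarrow> H \<in> A \<Longrightarrow> side H q = side H p"
  by (simp add: cell_def)

lemma convex_cell: "convex (cell p)"
proof -
  have "(normal H \<bullet> y \<noteq> 0 \<and> side H y = side H p) \<longleftrightarrow>
      y \<in> (if side H p then {y. normal H \<bullet> y > 0} else {y. normal H \<bullet> y < 0})" for H y
    by (auto simp: side_def)
  then have "cell p = (\<Inter>H\<in>A. if side H p then {y. normal H \<bullet> y > 0} else {y. normal H \<bullet> y < 0})"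
    unfolding cell_def by blast
  also have "convex \<dots>"
    by (rule convex_INT) (auto intro: convex_halfspace_gt convex_halfspace_lt)
  finally show ?thesis .
qed

lemma connected_component_eq_cell:
  assumes p: "p \<notin> \<Union>A"
  shows "connected_component_set (- \<Union>A) p = cell p"
proof
  show "cell p \<subseteq> connected_component_set (- \<Union>A) p"
    using cell_self[OF p] convex_connected[OF convex_cell] cell_subset
    by (rule connected_component_maximal)
next
  show "connected_component_set (- \<Union>A) p \<subseteq> cell p"
  proof
    fix y assume "y \<in> connected_component_set (- \<Union>A) p"
    then obtain T where T: "connected T" "T \<subseteq> - \<Union>A" "p \<in> T" "y \<in> T"
      by (auto simp: connected_component_def)
    have "side H y = side H p" if H: "H \<in> A" for H
    proof -
      have "normal H \<bullet> y \<noteq> 0" "normal H \<bullet> p \<noteq> 0" using T H not_in_arrangement_iff by blast+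
      moreover have "T \<subseteq> - {z. normal H \<bullet> z = 0}" using T(2) H mem_hyperplane_iff by blast
      then have "connected_component (- {z. normal H \<bullet> z = 0}) y p"
        using T by (meson connected_componentI)
      ultimately show ?thesis
        using connected_component_hyperplane_complement_iff by (auto simp: side_def)
    qed
    then show "y \<in> cell p" using T not_in_arrangement_iff by (auto simp: cell_def)
  qed
qed

lemma chambers_eq_cells: "chambers A = cell ` (- \<Union>A)"
  unfolding chambers_def components_def using connected_component_eq_cell by auto

lemma chamber_eq_cell:
  assumes "c \<in> chambers A" "x \<in> c"
  shows "x \<notin> \<Union>A" "c = cell x"
  using assms cell_subset cell_eq_if_mem unfolding chambers_eq_cells by blast+

lemma chamberE:
  assumes "c \<in> chambers A"
  obtains x where "x \<notin> \<Union>A" "c = cell x"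
  using assms chambers_eq_cells by auto

lemma open_chamber: "c \<in> chambers A \<Longrightarrow> open c"
proof -
  have "closed H" if "H \<in> A" for H by (subst hyperplane_normal[OF that]) (rule closed_hyperplane)
  then have "closed (\<Union>A)" using finite_arrangement by (auto intro!: closed_Union)
  then show "c \<in> chambers A \<Longrightarrow> open c" using open_components unfolding chambers_def by blast
qed

lemma L1_cell:
  assumes p: "p \<notin> \<Union>A" and q: "q \<notin> \<Union>A"
  shows "L1 A (cell p) (cell q) = {H\<in>A. side H p \<noteq> side H q}"
proof -
  have "separates H (cell p) (cell q) \<longleftrightarrow> side H p \<noteq> side H q" if H: "H \<in> A" for H
  proof -
    have "connected_component (- H) x y \<longleftrightarrow> side H x = side H y" if "x \<notin> \<Union>A" "y \<notin> \<Union>A" for x y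
      using connected_component_hyperplane_complement_iff[of "normal H" x y] hyperplane_normal[OF H]
        that H not_in_arrangement_iff by (auto simp: side_def)
    then show ?thesis unfolding separates_def
      using cell_self[OF p] cell_self[OF q] cell_subset side_cell[OF _ H] by (metis ComplD subsetD)
  qed
  then show ?thesis by (auto simp: L1_def)
qed

lemma finite_L1: "finite (L1 A c c')"
  using finite_arrangement by (rule finite_subset[rotated]) (auto simp: L1_def)

lemma L1_sym_diff:
  assumes "c0 \<in> chambers A" "c \<in> chambers A" "c' \<in> chambers A"
  shows "L1 A c c' = (L1 A c0 c - L1 A c0 c') \<union> (L1 A c0 c' - L1 A c0 c)"
proof -
  obtain x p q where "x \<notin> \<Union>A" "c0 = cell x" "p \<notin> \<Union>A" "c = cell p" "q \<notin> \<Union>A" "c' = cell q"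
    using assms by (metis chamberE)
  then show ?thesis by (auto simp: L1_cell)
qed

lemma L1_self: "c \<in> chambers A \<Longrightarrow> L1 A c c = {}"
  using L1_sym_diff by blast

lemma chamber_eq_if_L1_eq:
  assumes "c0 \<in> chambers A" "c \<in> chambers A" "c' \<in> chambers A" "L1 A c0 c = L1 A c0 c'"
  shows "c = c'"
proof -
  obtain p q where "p \<notin> \<Union>A" "c = cell p" "q \<notin> \<Union>A" "c' = cell q"
    using assms(2,3) by (metis chamberE)
  moreover have "L1 A c c' = {}" using L1_sym_diff[OF assms(1-3)] assms(4) by simp
  ultimately have "side H p = side H q" if "H \<in> A" for H using that by (auto simp: L1_cell)
  then show ?thesis using \<open>c = cell p\<close> \<open>c' = cell q\<close> cell_eqI by blast
qed

lemma uminus_cell: "p \<notin> \<Union>A \<Longrightarrow> uminus ` cell p = cell (- p)"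
proof -
  assume p: "p \<notin> \<Union>A"
  have "(normal H \<bullet> y \<noteq> 0 \<and> side H y = side H (- p)) \<longleftrightarrow>
      (normal H \<bullet> (- y) \<noteq> 0 \<and> side H (- y) = side H p)" if "H \<in> A" for H y
    using p that not_in_arrangement_iff by (auto simp: side_def)
  then have "y \<in> cell (- p) \<longleftrightarrow> - y \<in> cell p" for y
    unfolding cell_def by auto
  then show ?thesis by (auto simp: image_iff) (metis minus_minus)
qed

lemma uminus_chamber:
  assumes "c \<in> chambers A"
  shows "uminus ` c \<in> chambers A" and "L1 A c (uminus ` c) = A"
proof -
  obtain p where p: "p \<notin> \<Union>A" "c = cell p" using assms by (rule chamberE)
  have "- p \<notin> \<Union>A" using p(1) by (auto simp: mem_hyperplane_iff)
  then show "uminus ` c \<in> chambers A" using uminus_cell[OF p(1)] p(2) chambers_eq_cells by auto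
  show "L1 A c (uminus ` c) = A"
    using uminus_cell[OF p(1)] p L1_cell[OF p(1) \<open>- p \<notin> \<Union>A\<close>] side_uminus[OF _ p(1)] by auto
qed

lemma Int_mem_L2:
  assumes "H \<in> A" "H' \<in> A" "H \<noteq> H'"
  shows "H \<inter> H' \<in> L2 A"
proof -
  have "{H, H'} \<subseteq> A" "H \<inter> H' = \<Inter>{H, H'}" using assms by auto
  moreover have "dim (H \<inter> H') + 2 = DIM('a)"
    using dim_Int_linear_hyperplanes linear_hyperplane_arrangement assms by blast
  ultimately show ?thesis unfolding L2_def by blast
qed

lemma L2_eq_Int:
  assumes X: "X \<in> L2 A" and H: "H \<in> A" "H' \<in> A" "H \<noteq> H'" and sub: "X \<subseteq> H" "X \<subseteq> H'"
  shows "X = H \<inter> H'"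
proof -
  obtain S where S: "S \<subseteq> A" "X = \<Inter>S" and dim: "dim X + 2 = DIM('a)"
    using X by (auto simp: L2_def)
  have "subspace X"
    using S subspace_Inter subspace_linear_hyperplane linear_hyperplane_arrangement by blast
  moreover have "subspace (H \<inter> H')"
    using H subspace_inter subspace_linear_hyperplane linear_hyperplane_arrangement by blast
  moreover have "dim (H \<inter> H') \<le> dim X"
    using dim_Int_linear_hyperplanes[OF linear_hyperplane_arrangement[OF H(1)]
        linear_hyperplane_arrangement[OF H(2)] H(3)] dim
    by simp
  ultimately show ?thesis using sub subspace_dim_equal[of X "H \<inter> H'"] by blast
qed

lemma normal_of_pencil:
  assumes H: "H1 \<in> A" "H2 \<in> A" "H3 \<in> A" "H1 \<noteq> H3" "H2 \<noteq> H3" and sub: "H1 \<inter> H2 \<subseteq> H3"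
  obtains u v where "u \<noteq> 0" "v \<noteq> 0" "normal H3 = u *\<^sub>R normal H1 + v *\<^sub>R normal H2"
proof -
  have "normal H3 \<bullet> z = 0" if "normal H1 \<bullet> z = 0" "normal H2 \<bullet> z = 0" for z
    using that sub H mem_hyperplane_iff by blast
  then obtain u v where uv: "normal H3 = u *\<^sub>R normal H1 + v *\<^sub>R normal H2"
    using normal_in_span_of_pencil by blast
  have "H3 = H2" if "u = 0"
    using uv that normal_nonzero[OF H(3)] hyperplane_normal[OF H(2)] hyperplane_normal[OF H(3)]
    by (auto simp: inner_add_left)
  moreover have "H3 = H1" if "v = 0"
    using uv that normal_nonzero[OF H(3)] hyperplane_normal[OF H(1)] hyperplane_normal[OF H(3)]
    by (auto simp: inner_add_left)
  ultimately show thesis using that uv H by blast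
qed

end

locale based_arrangement = linear_arrangement +
  fixes c0 :: "'a set"
  assumes base_chamber: "c0 \<in> chambers A"
begin

lemma L1_base_cell:
  assumes "x \<in> c0" "p \<notin> \<Union>A"
  shows "L1 A c0 (cell p) = {H\<in>A. side H x \<noteq> side H p}"
  using L1_cell[OF _ assms(2)] chamber_eq_cell[OF base_chamber assms(1)] by metis

lemma L1_gallery_Suc:
  assumes "gallery A g" "Suc k < length g"
  obtains H where "L1 A (g ! k) (g ! Suc k) = {H}"
    and "L1 A c0 (g ! Suc k) = (L1 A c0 (g ! k) - {H}) \<union> ({H} - L1 A c0 (g ! k))"
proof -
  have ch: "g ! k \<in> chambers A" "g ! Suc k \<in> chambers A"
    using assms by (auto simp: gallery_def)
  have "card (L1 A (g ! k) (g ! Suc k)) = 1" using assms by (simp add: gallery_def)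
  then obtain H where H: "L1 A (g ! k) (g ! Suc k) = {H}" by (rule card_1_singletonE)
  then show thesis using that L1_sym_diff[OF base_chamber ch] by blast
qed

lemma card_L1_gallery_le:
  assumes "gallery A g" "k \<le> j" "j < length g"
  shows "card (L1 A c0 (g ! j)) \<le> card (L1 A c0 (g ! k)) + (j - k)"
  using assms(2,3)
proof (induction j)
  case (Suc j)
  show ?case
  proof (cases "k = Suc j")
    case False
    obtain H where "L1 A c0 (g ! Suc j) = (L1 A c0 (g ! j) - {H}) \<union> ({H} - L1 A c0 (g ! j))"
      using L1_gallery_Suc[OF assms(1) Suc.prems(2)] .
    then have "L1 A c0 (g ! Suc j) \<subseteq> insert H (L1 A c0 (g ! j))" by blast
    then have "card (L1 A c0 (g ! Suc j)) \<le> card (insert H (L1 A c0 (g ! j)))"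
      by (intro card_mono) (simp_all add: finite_L1)
    also have "\<dots> \<le> Suc (card (L1 A c0 (g ! j)))"
      by (simp add: finite_L1 card_insert_if)
    finally have "card (L1 A c0 (g ! Suc j)) \<le> Suc (card (L1 A c0 (g ! j)))" .
    then show ?thesis using Suc False by simp
  qed simp
qed simp

lemma length_gallery_to_antipode:
  assumes "gallery_from_to A c0 (uminus ` c0) g"
  shows "card A + 1 \<le> length g"
proof -
  have g: "gallery A g" "g ! 0 = c0" "g ! (length g - 1) = uminus ` c0" "0 < length g"
    using assms by (auto simp: gallery_from_to_def gallery_def hd_conv_nth last_conv_nth)
  have "card A = card (L1 A c0 (g ! (length g - 1)))"
    using g(3) uminus_chamber(2)[OF base_chamber] by simp
  also have "\<dots> \<le> card (L1 A c0 (g ! 0)) + (length g - 1)"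
    using card_L1_gallery_le[OF g(1), of 0 "length g - 1"] g(4) by simp
  finally have "card A \<le> length g - 1" using g(2) L1_self[OF base_chamber] by simp
  then show ?thesis using g(4) by linarith
qed

lemma card_L1_between_thresholds:
  fixes t :: "'a set \<Rightarrow> real"
  assumes c: "c \<in> chambers A" "L1 A c0 c = {H\<in>A. t H < s}"
    and c': "c' \<in> chambers A" "L1 A c0 c' = {H\<in>A. t H < s'}"
    and card: "card (L1 A c0 c') = Suc (card (L1 A c0 c))"
  shows "card (L1 A c c') = 1"
proof -
  have "s < s'"
  proof (rule ccontr)
    assume "\<not> s < s'"
    then have "L1 A c0 c' \<subseteq> L1 A c0 c" using c c' by auto
    then have "card (L1 A c0 c') \<le> card (L1 A c0 c)" by (rule card_mono[OF finite_L1])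
    then show False using card by simp
  qed
  then have sub: "L1 A c0 c \<subseteq> L1 A c0 c'" using c c' by auto
  then have "L1 A c c' = L1 A c0 c' - L1 A c0 c"
    using L1_sym_diff[OF base_chamber c(1) c'(1)] by auto
  then show ?thesis using card_Diff_subset[OF finite_L1 sub] card by simp
qed

lemma gallery_from_thresholds:
  fixes t :: "'a set \<Rightarrow> real"
  assumes inj: "inj_on t A"
    and threshold_chamber: "\<And>s. s \<notin> t ` A \<Longrightarrow> \<exists>c\<in>chambers A. L1 A c0 c = {H\<in>A. t H < s}"
  shows "\<exists>g. gallery_from_to A c0 (uminus ` c0) g \<and> length g = card A + 1"
proof -
  have card_below: "card {H\<in>A. t H < s} = card {y\<in>t ` A. y < s}" for s
  proof -
    have "{y\<in>t ` A. y < s} = t ` {H\<in>A. t H < s}" by auto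
    then show ?thesis using card_image[OF inj_on_subset[OF inj]] by simp
  qed
  have "\<exists>s. s \<notin> t ` A \<and> card {H\<in>A. t H < s} = k" if "k \<le> card A" for k
    using exists_threshold_with_card[of "t ` A" k] that finite_arrangement inj
    by (simp add: card_below card_image)
  then obtain S where S: "\<And>k. k \<le> card A \<Longrightarrow> S k \<notin> t ` A \<and> card {H\<in>A. t H < S k} = k"
    by metis
  have "\<exists>c. c \<in> chambers A \<and> L1 A c0 c = {H\<in>A. t H < S k}" if "k \<le> card A" for k
    using threshold_chamber S[OF that] by blast
  then obtain C where C: "\<And>k. k \<le> card A \<Longrightarrow> C k \<in> chambers A \<and> L1 A c0 (C k) = {H\<in>A. t H < S k}"
    by metis
  have step: "card (L1 A (C k) (C (Suc k))) = 1" if "k < card A" for k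
    using card_L1_between_thresholds[of "C k" t "S k" "C (Suc k)" "S (Suc k)"]
      C[of k] C[of "Suc k"] S[of k] S[of "Suc k"] that by simp
  define g where "g = map C [0..<card A + 1]"
  have nth_g: "i < length g \<Longrightarrow> g ! i = C i" for i
    by (simp add: g_def del: upt_Suc)
  have "gallery A g"
    unfolding gallery_def using C step by (auto simp: g_def nth_g simp del: upt_Suc)
  moreover have "finite {H\<in>A. t H < S 0}" using finite_arrangement by simp
  then have "L1 A c0 (C 0) = L1 A c0 c0"
    using C[of 0] S[of 0] L1_self[OF base_chamber] by simp
  then have "C 0 = c0"
    using chamber_eq_if_L1_eq[OF base_chamber _ base_chamber] C[of 0] by simp
  moreover have "{H\<in>A. t H < S (card A)} = A"
    using S[of "card A"] card_subset_eq[OF finite_arrangement, of "{H\<in>A. t H < S (card A)}"] by simp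
  then have "C (card A) = uminus ` c0"
    using chamber_eq_if_L1_eq[OF base_chamber _ uminus_chamber(1)[OF base_chamber], of "C (card A)"]
      C[of "card A"] uminus_chamber(2)[OF base_chamber] by simp
  moreover have "hd g = C 0" "last g = C (card A)" "length g = card A + 1"
    by (simp_all add: g_def hd_map last_map del: upt_Suc)
  ultimately show ?thesis by (auto simp: gallery_from_to_def)
qed

text \<open>\<open>(normal H \<bullet> x) / (normal H \<bullet> w)\<close> is the parameter at which the line \<open>s \<mapsto> x - s *\<^sub>R w\<close>
  meets \<open>H\<close>.\<close>
lemma L1_along_line:
  assumes x: "x \<in> c0" and w: "w \<in> c0"
    and s: "s \<notin> (\<lambda>H. (normal H \<bullet> x) / (normal H \<bullet> w)) ` A"
  shows "x - s *\<^sub>R w \<notin> \<Union>A"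
    and "L1 A c0 (cell (x - s *\<^sub>R w)) = {H\<in>A. (normal H \<bullet> x) / (normal H \<bullet> w) < s}"
proof -
  define t where "t H = (normal H \<bullet> x) / (normal H \<bullet> w)" for H
  have "x \<notin> \<Union>A" "w \<notin> \<Union>A" "w \<in> cell x"
    using chamber_eq_cell[OF base_chamber x] chamber_eq_cell[OF base_chamber w] w by auto
  then have nz: "normal H \<bullet> x \<noteq> 0" "normal H \<bullet> w \<noteq> 0" "side H w = side H x" if "H \<in> A" for H
    using that not_in_arrangement_iff side_cell by blast+
  have eq: "normal H \<bullet> (x - s *\<^sub>R w) = (normal H \<bullet> w) * (t H - s)" if "H \<in> A" for H
    using nz(2)[OF that] by (simp add: t_def inner_diff_right field_simps)
  have ts: "t H - s \<noteq> 0" if "H \<in> A" for H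
    using s that by (auto simp: t_def)
  have "\<forall>H\<in>A. normal H \<bullet> (x - s *\<^sub>R w) \<noteq> 0" using eq ts nz(2) by simp
  then show off: "x - s *\<^sub>R w \<notin> \<Union>A" using not_in_arrangement_iff by blast
  have "side H x \<noteq> side H (x - s *\<^sub>R w) \<longleftrightarrow> t H < s" if H: "H \<in> A" for H
    using eq[OF H] ts[OF H] nz(2-3)[OF H] unfolding side_def
    by (cases "normal H \<bullet> w > 0") (auto simp: zero_less_mult_iff)
  then show "L1 A c0 (cell (x - s *\<^sub>R w)) = {H\<in>A. (normal H \<bullet> x) / (normal H \<bullet> w) < s}"
    using L1_base_cell[OF x off] by (auto simp: t_def)
qed

lemma exists_generic_direction:
  assumes x: "x \<in> c0"
  obtains w where "w \<in> c0" "inj_on (\<lambda>H. (normal H \<bullet> x) / (normal H \<bullet> w)) A"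
proof -
  have nx: "normal H \<bullet> x \<noteq> 0" if "H \<in> A" for H
    using chamber_eq_cell[OF base_chamber x] that not_in_arrangement_iff by blast
  define b where "b H H' = (normal H' \<bullet> x) *\<^sub>R normal H - (normal H \<bullet> x) *\<^sub>R normal H'" for H H'
  have b: "b H H' \<bullet> v = (normal H \<bullet> v) * (normal H' \<bullet> x) - (normal H' \<bullet> v) * (normal H \<bullet> x)" for H H' v
    by (simp add: b_def inner_diff_left algebra_simps)
  have b_nonzero: "b H H' \<noteq> 0" if H: "H \<in> A" "H' \<in> A" "H \<noteq> H'" for H H'
  proof
    assume "b H H' = 0"
    then have "(normal H \<bullet> v) * (normal H' \<bullet> x) = (normal H' \<bullet> v) * (normal H \<bullet> x)" for v
      using b[of H H' v] by simp
    then have "v \<in> H \<longleftrightarrow> v \<in> H'" for v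
      using nx[OF H(1)] nx[OF H(2)] mem_hyperplane_iff[OF H(1)] mem_hyperplane_iff[OF H(2)]
      by (metis mult_eq_0_iff)
    then show False using H(3) by blast
  qed
  define N where "N = {b H H' |H H'. H \<in> A \<and> H' \<in> A} - {0}"
  have "finite N"
    unfolding N_def using finite_image_set2[of "\<lambda>H. H \<in> A" "\<lambda>H. H \<in> A" b] finite_arrangement
    by simp
  moreover have "0 \<notin> N" by (simp add: N_def)
  moreover have "c0 \<noteq> {}" using x by auto
  ultimately obtain w where w: "w \<in> c0" "\<And>v. v \<in> N \<Longrightarrow> v \<bullet> w \<noteq> 0"
    using open_avoids_finitely_many_hyperplanes[OF open_chamber[OF base_chamber]] by blast
  have nw: "normal H \<bullet> w \<noteq> 0" if "H \<in> A" for H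
    using chamber_eq_cell[OF base_chamber w(1)] that not_in_arrangement_iff by blast
  have "inj_on (\<lambda>H. (normal H \<bullet> x) / (normal H \<bullet> w)) A"
  proof (rule inj_onI, rule ccontr)
    fix H H' assume H: "H \<in> A" "H' \<in> A" and eq: "(normal H \<bullet> x) / (normal H \<bullet> w) = (normal H' \<bullet> x) / (normal H' \<bullet> w)"
      and "H \<noteq> H'"
    then have "b H H' \<in> N" using b_nonzero unfolding N_def by blast
    moreover have "b H H' \<bullet> w = 0"
      using eq nw[OF H(1)] nw[OF H(2)] by (simp add: b frac_eq_eq mult.commute)
    ultimately show False using w(2) by blast
  qed
  then show thesis using that w(1) by blast
qed

lemma exists_gallery_to_antipode:
  "\<exists>g. gallery_from_to A c0 (uminus ` c0) g \<and> length g = card A + 1"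
proof -
  obtain x where x: "x \<in> c0"
    using base_chamber by (metis chamberE cell_self)
  obtain w where w: "w \<in> c0" and inj: "inj_on (\<lambda>H. (normal H \<bullet> x) / (normal H \<bullet> w)) A"
    using exists_generic_direction[OF x] .
  show ?thesis
  proof (rule gallery_from_thresholds[OF inj])
    fix s assume s: "s \<notin> (\<lambda>H. (normal H \<bullet> x) / (normal H \<bullet> w)) ` A"
    have "cell (x - s *\<^sub>R w) \<in> chambers A"
      unfolding chambers_eq_cells using L1_along_line(1)[OF x w s] by simp
    then show "\<exists>c\<in>chambers A. L1 A c0 c = {H\<in>A. (normal H \<bullet> x) / (normal H \<bullet> w) < s}"
      using L1_along_line(2)[OF x w s] by blast
  qed
qed

abbreviation reduced_gallery :: "'a set list \<Rightarrow> bool" where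
  "reduced_gallery r \<equiv> minimal_gallery A c0 (uminus ` c0) r"

lemma length_reduced_gallery:
  assumes "reduced_gallery r"
  shows "length r = card A + 1"
proof -
  obtain g where "gallery_from_to A c0 (uminus ` c0) g" "length g = card A + 1"
    using exists_gallery_to_antipode by blast
  then have "length r \<le> card A + 1" using assms by (auto simp: minimal_gallery_def)
  moreover have "card A + 1 \<le> length r"
    using assms length_gallery_to_antipode by (simp add: minimal_gallery_def)
  ultimately show ?thesis by simp
qed

lemma reduced_gallery_nth:
  assumes "reduced_gallery r"
  shows "gallery A r" "r ! 0 = c0" "r ! card A = uminus ` c0"
    and "k \<le> card A \<Longrightarrow> r ! k \<in> chambers A"
proof -
  show g: "gallery A r" using assms by (simp add: minimal_gallery_def gallery_from_to_def)
  have "r \<noteq> []" "set r \<subseteq> chambers A" using g by (simp_all add: gallery_def)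
  then show "r ! 0 = c0" "r ! card A = uminus ` c0" "k \<le> card A \<Longrightarrow> r ! k \<in> chambers A"
    using assms length_reduced_gallery[OF assms]
    by (auto simp: minimal_gallery_def gallery_from_to_def hd_conv_nth last_conv_nth)
qed

lemma card_L1_reduced_gallery:
  assumes r: "reduced_gallery r" and k: "k \<le> card A"
  shows "card (L1 A c0 (r ! k)) = k"
proof -
  have "card (L1 A c0 (r ! k)) \<le> card (L1 A c0 (r ! 0)) + k"
    using card_L1_gallery_le[OF reduced_gallery_nth(1)[OF r], of 0 k] k length_reduced_gallery[OF r]
    by simp
  moreover have "card (L1 A c0 (r ! card A)) \<le> card (L1 A c0 (r ! k)) + (card A - k)"
    using card_L1_gallery_le[OF reduced_gallery_nth(1)[OF r] k] length_reduced_gallery[OF r] by simp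
  ultimately show ?thesis
    using reduced_gallery_nth(2,3)[OF r] L1_self[OF base_chamber] uminus_chamber(2)[OF base_chamber] k
    by simp
qed

definition crossing :: "'a set list \<Rightarrow> nat \<Rightarrow> 'a set" where
  "crossing r k = the_elem (L1 A (r ! k) (r ! Suc k))"

lemma reduced_gallery_step:
  assumes r: "reduced_gallery r" and k: "k < card A"
  shows "L1 A (r ! k) (r ! Suc k) = {crossing r k}"
    and "crossing r k \<in> A" "crossing r k \<notin> L1 A c0 (r ! k)"
    and "L1 A c0 (r ! Suc k) = insert (crossing r k) (L1 A c0 (r ! k))"
proof -
  have "Suc k < length r" using length_reduced_gallery[OF r] k by simp
  then obtain H where H: "L1 A (r ! k) (r ! Suc k) = {H}"
    and step: "L1 A c0 (r ! Suc k) = (L1 A c0 (r ! k) - {H}) \<union> ({H} - L1 A c0 (r ! k))"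
    using L1_gallery_Suc[OF reduced_gallery_nth(1)[OF r]] by blast
  show eq: "L1 A (r ! k) (r ! Suc k) = {crossing r k}" using H by (simp add: crossing_def)
  then show "crossing r k \<in> A" by (auto simp: L1_def)
  have card: "card (L1 A c0 (r ! Suc k)) = Suc (card (L1 A c0 (r ! k)))"
    using card_L1_reduced_gallery[OF r] k by simp
  show new: "crossing r k \<notin> L1 A c0 (r ! k)"
  proof
    assume "crossing r k \<in> L1 A c0 (r ! k)"
    then have "L1 A c0 (r ! Suc k) \<subseteq> L1 A c0 (r ! k)" using H eq step by auto
    then have "card (L1 A c0 (r ! Suc k)) \<le> card (L1 A c0 (r ! k))" by (rule card_mono[OF finite_L1])
    with card show False by simp
  qed
  show "L1 A c0 (r ! Suc k) = insert (crossing r k) (L1 A c0 (r ! k))"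
    using H eq step new by auto
qed

lemma L1_reduced_gallery_eq_image:
  assumes r: "reduced_gallery r" and "k \<le> card A"
  shows "L1 A c0 (r ! k) = crossing r ` {..<k}"
  using assms(2)
proof (induction k)
  case 0
  then show ?case using reduced_gallery_nth(2)[OF r] L1_self[OF base_chamber] by simp
next
  case (Suc k)
  then show ?case using reduced_gallery_step(4)[OF r, of k] by (simp add: lessThan_Suc)
qed

lemma bij_betw_crossing:
  assumes r: "reduced_gallery r"
  shows "bij_betw (crossing r) {..<card A} A"
proof -
  have image: "crossing r ` {..<card A} = A"
    using L1_reduced_gallery_eq_image[OF r order_refl] reduced_gallery_nth(3)[OF r]
      uminus_chamber(2)[OF base_chamber] by simp
  then have "inj_on (crossing r) {..<card A}"
    using eq_card_imp_inj_on[of "{..<card A}" "crossing r"] by simp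
  then show ?thesis using image by (simp add: bij_betw_def)
qed

definition crossing_index :: "'a set list \<Rightarrow> 'a set \<Rightarrow> nat" where
  "crossing_index r = inv_into {..<card A} (crossing r)"

lemma crossing_index:
  assumes "reduced_gallery r" "H \<in> A"
  shows "crossing_index r H < card A" "crossing r (crossing_index r H) = H"
  using bij_betw_inv_into_right[OF bij_betw_crossing[OF assms(1)] assms(2)]
    bij_betw_apply[OF bij_betw_inv_into[OF bij_betw_crossing[OF assms(1)]] assms(2)]
  by (simp_all add: crossing_index_def)

lemma crossing_index_crossing:
  assumes "reduced_gallery r" "i < card A"
  shows "crossing_index r (crossing r i) = i"
  using bij_betw_inv_into_left[OF bij_betw_crossing[OF assms(1)]] assms(2)
  by (simp add: crossing_index_def)

lemma crossing_index_inj: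
  assumes "reduced_gallery r"
  shows "inj_on (crossing_index r) A"
proof (rule inj_onI)
  fix H H' assume "H \<in> A" "H' \<in> A" "crossing_index r H = crossing_index r H'"
  then show "H = H'" by (metis crossing_index(2)[OF assms])
qed

lemma L1_reduced_gallery:
  assumes r: "reduced_gallery r" and k: "k \<le> card A"
  shows "L1 A c0 (r ! k) = {H\<in>A. crossing_index r H < k}"
proof -
  have "crossing r ` {..<k} = {H\<in>A. crossing_index r H < k}"
  proof (intro equalityI subsetI)
    fix H assume "H \<in> crossing r ` {..<k}"
    then obtain i where "i < k" "H = crossing r i" by blast
    then show "H \<in> {H\<in>A. crossing_index r H < k}"
      using k reduced_gallery_step(2)[OF r, of i] crossing_index_crossing[OF r, of i] by simp
  next
    fix H assume "H \<in> {H\<in>A. crossing_index r H < k}"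
    then have "H = crossing r (crossing_index r H)" "crossing_index r H \<in> {..<k}"
      using crossing_index(2)[OF r] by auto
    then show "H \<in> crossing r ` {..<k}" by (rule image_eqI)
  qed
  then show ?thesis using L1_reduced_gallery_eq_image[OF r k] by simp
qed

lemma crosses_before_iff:
  assumes r: "reduced_gallery r" and "H \<in> A" "H' \<in> A"
  shows "crosses_before A r H H' \<longleftrightarrow> crossing_index r H < crossing_index r H'"
proof -
  have crosses_at: "crosses_at A r K i \<longleftrightarrow> i < card A \<and> K = crossing r i" for K i
    using reduced_gallery_step(1)[OF r] length_reduced_gallery[OF r] by (auto simp: crosses_at_def)
  show ?thesis
  proof
    assume "crosses_before A r H H'"
    then obtain i j where "i < j" "j < card A" "H = crossing r i" "H' = crossing r j"
      unfolding crosses_before_def crosses_at by blast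
    then show "crossing_index r H < crossing_index r H'"
      using crossing_index_crossing[OF r] by simp
  next
    assume "crossing_index r H < crossing_index r H'"
    then show "crosses_before A r H H'"
      unfolding crosses_before_def crosses_at using crossing_index[OF r] assms(2,3) by metis
  qed
qed

lemma crossing_index_eq_card:
  assumes r: "reduced_gallery r" and H: "H \<in> A"
  shows "crossing_index r H = card {K\<in>A. crossing_index r K < crossing_index r H}"
  using card_L1_reduced_gallery[OF r] L1_reduced_gallery[OF r] crossing_index(1)[OF r H] by simp

lemma reduced_gallery_eqI:
  assumes r: "reduced_gallery r" and s: "reduced_gallery s"
    and order: "\<And>H H'. H \<in> A \<Longrightarrow> H' \<in> A \<Longrightarrow>
      crossing_index r H < crossing_index r H' \<longleftrightarrow> crossing_index s H < crossing_index s H'"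
  shows "r = s"
proof (rule nth_equalityI)
  show "length r = length s" using length_reduced_gallery[OF r] length_reduced_gallery[OF s] by simp
  have same_index: "crossing_index r H = crossing_index s H" if "H \<in> A" for H
  proof -
    have "{K\<in>A. crossing_index r K < crossing_index r H} = {K\<in>A. crossing_index s K < crossing_index s H}"
      using order[OF _ that] by blast
    then show ?thesis using crossing_index_eq_card[OF r that] crossing_index_eq_card[OF s that] by simp
  qed
  fix k assume "k < length r"
  then have k: "k \<le> card A" using length_reduced_gallery[OF r] by simp
  have "L1 A c0 (r ! k) = L1 A c0 (s ! k)"
    using L1_reduced_gallery[OF r k] L1_reduced_gallery[OF s k] same_index by auto
  then show "r ! k = s ! k"
    using chamber_eq_if_L1_eq[OF base_chamber] reduced_gallery_nth(4)[OF r k] reduced_gallery_nth(4)[OF s k]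
    by blast
qed

definition extremal :: "'a set set \<Rightarrow> 'a set \<Rightarrow> bool" where
  "extremal S H \<longleftrightarrow> (\<exists>c\<in>chambers A. L1 A c0 c \<inter> S = {H} \<or> L1 A c0 c \<inter> S = S - {H})"

lemma extremal_flip_pattern:
  assumes ext: "extremal {H1, H2, H3} H1"
    and H: "H1 \<in> A" "H2 \<in> A" "H3 \<in> A" "H1 \<noteq> H2" "H1 \<noteq> H3" "H2 \<noteq> H3" and x: "x \<in> c0"
  obtains p where "p \<notin> \<Union>A"
    and "(side H1 x \<noteq> side H1 p) \<noteq> (side H2 x \<noteq> side H2 p)"
    and "(side H2 x \<noteq> side H2 p) = (side H3 x \<noteq> side H3 p)"
proof -
  obtain c where c: "c \<in> chambers A"
    and pattern: "L1 A c0 c \<inter> {H1, H2, H3} = {H1} \<or> L1 A c0 c \<inter> {H1, H2, H3} = {H1, H2, H3} - {H1}"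
    using ext by (auto simp: extremal_def)
  obtain p where p: "p \<notin> \<Union>A" "c = cell p" using c by (rule chamberE)
  have flipped: "H \<in> L1 A c0 c \<longleftrightarrow> side H x \<noteq> side H p" if "H \<in> A" for H
    using L1_base_cell[OF x p(1)] p(2) that by auto
  have "(H1 \<in> L1 A c0 c) \<noteq> (H2 \<in> L1 A c0 c)" "(H2 \<in> L1 A c0 c) = (H3 \<in> L1 A c0 c)"
    using pattern H(4-6) by auto
  then show thesis using that[OF p(1)] flipped[OF H(1)] flipped[OF H(2)] flipped[OF H(3)] by argo
qed

lemma pencil_not_all_extremal:
  assumes H: "H1 \<in> A" "H2 \<in> A" "H3 \<in> A" "H1 \<noteq> H2" "H1 \<noteq> H3" "H2 \<noteq> H3"
    and sub: "H1 \<inter> H2 \<subseteq> H3"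
  shows "\<not> (extremal {H1, H2, H3} H1 \<and> extremal {H2, H1, H3} H2 \<and> extremal {H3, H1, H2} H3)"
proof
  assume ext: "extremal {H1, H2, H3} H1 \<and> extremal {H2, H1, H3} H2 \<and> extremal {H3, H1, H2} H3"
  obtain u v where uv: "u \<noteq> 0" "v \<noteq> 0" "normal H3 = u *\<^sub>R normal H1 + v *\<^sub>R normal H2"
    using normal_of_pencil[OF H(1-3,5,6) sub] .
  obtain x where x: "x \<in> c0" using base_chamber by (metis chamberE cell_self)
  define P1 where "P1 q = u * (normal H1 \<bullet> q)" for q
  define P2 where "P2 q = v * (normal H2 \<bullet> q)" for q
  have nonzero: "normal H1 \<bullet> q \<noteq> 0" "normal H2 \<bullet> q \<noteq> 0" "normal H3 \<bullet> q \<noteq> 0" if "q \<notin> \<Union>A" for q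
    using that H not_in_arrangement_iff by blast+
  have P: "P1 q \<noteq> 0" "P2 q \<noteq> 0" "P1 q + P2 q \<noteq> 0" if "q \<notin> \<Union>A" for q
    using nonzero[OF that] uv by (simp_all add: P1_def P2_def inner_add_left)
  have x_off: "x \<notin> \<Union>A" using chamber_eq_cell[OF base_chamber x] by simp
  have flip1: "(side H1 x \<noteq> side H1 q) \<longleftrightarrow> ((0 < P1 x) \<noteq> (0 < P1 q))" if "q \<notin> \<Union>A" for q
    using nonzero(1)[OF that] nonzero(1)[OF x_off] uv(1) unfolding side_def P1_def
    by (cases "u > 0") (auto simp: zero_less_mult_iff)
  have flip2: "(side H2 x \<noteq> side H2 q) \<longleftrightarrow> ((0 < P2 x) \<noteq> (0 < P2 q))" if "q \<notin> \<Union>A" for q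
    using nonzero(2)[OF that] nonzero(2)[OF x_off] uv(2) unfolding side_def P2_def
    by (cases "v > 0") (auto simp: zero_less_mult_iff)
  have flip3: "(side H3 x \<noteq> side H3 q) \<longleftrightarrow> ((0 < P1 x + P2 x) \<noteq> (0 < P1 q + P2 q))" for q
    by (simp add: side_def P1_def P2_def uv(3) inner_add_left)
  obtain p where p: "p \<notin> \<Union>A" "(side H1 x \<noteq> side H1 p) \<noteq> (side H2 x \<noteq> side H2 p)"
    "(side H2 x \<noteq> side H2 p) = (side H3 x \<noteq> side H3 p)"
    using extremal_flip_pattern[of H1 H2 H3] ext H x by blast
  obtain q where q: "q \<notin> \<Union>A" "(side H2 x \<noteq> side H2 q) \<noteq> (side H1 x \<noteq> side H1 q)"
    "(side H1 x \<noteq> side H1 q) = (side H3 x \<noteq> side H3 q)"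
    using extremal_flip_pattern[of H2 H1 H3] ext H x by blast
  obtain s where s: "s \<notin> \<Union>A" "(side H3 x \<noteq> side H3 s) \<noteq> (side H1 x \<noteq> side H1 s)"
    "(side H1 x \<noteq> side H1 s) = (side H2 x \<noteq> side H2 s)"
    using extremal_flip_pattern[of H3 H1 H2] ext H x by blast
  show False
    using pencil_flip_patterns[of "P1 x" "P2 x" "P1 p" "P2 p" "P1 q" "P2 q" "P1 s" "P2 s"]
      P[OF x_off] P[OF p(1)] P[OF q(1)] P[OF s(1)] p(2-3) q(2-3) s(2-3)
      flip1[OF p(1)] flip1[OF q(1)] flip1[OF s(1)] flip2[OF p(1)] flip2[OF q(1)] flip2[OF s(1)]
      flip3[of p] flip3[of q] flip3[of s]
    by argo
qed

lemma extremal_if_crossed_first: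
  assumes r: "reduced_gallery r" and S: "S \<subseteq> A" "H \<in> S"
    and first: "\<And>H'. H' \<in> S \<Longrightarrow> H' \<noteq> H \<Longrightarrow> crossing_index r H < crossing_index r H'"
  shows "extremal S H"
proof -
  have k: "Suc (crossing_index r H) \<le> card A" using crossing_index(1)[OF r, of H] S by auto
  have "L1 A c0 (r ! Suc (crossing_index r H)) \<inter> S = {H}"
    using L1_reduced_gallery[OF r k] S first by fastforce
  then show ?thesis using reduced_gallery_nth(4)[OF r k] by (auto simp: extremal_def)
qed

lemma extremal_if_crossed_last:
  assumes r: "reduced_gallery r" and S: "S \<subseteq> A" "H \<in> S"
    and last: "\<And>H'. H' \<in> S \<Longrightarrow> H' \<noteq> H \<Longrightarrow> crossing_index r H' < crossing_index r H"
  shows "extremal S H"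
proof -
  have k: "crossing_index r H \<le> card A" using crossing_index(1)[OF r, of H] S by auto
  have "L1 A c0 (r ! crossing_index r H) \<inter> S = S - {H}"
    using L1_reduced_gallery[OF r k] S last by fastforce
  then show ?thesis using reduced_gallery_nth(4)[OF r k] by (auto simp: extremal_def)
qed

lemma nonextremal_crossed_between:
  assumes r: "reduced_gallery r"
    and H: "H1 \<in> A" "H2 \<in> A" "H3 \<in> A" "H1 \<noteq> H2" "H1 \<noteq> H3" "H2 \<noteq> H3"
    and "\<not> extremal {H1, H2, H3} H1"
  shows "crossing_index r H2 < crossing_index r H1 \<and> crossing_index r H1 < crossing_index r H3
    \<or> crossing_index r H3 < crossing_index r H1 \<and> crossing_index r H1 < crossing_index r H2"
proof -
  have "crossing_index r H1 \<noteq> crossing_index r H2" "crossing_index r H1 \<noteq> crossing_index r H3"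
    using H inj_onD[OF crossing_index_inj[OF r]] by metis+
  moreover have "\<not> (crossing_index r H1 < crossing_index r H2 \<and> crossing_index r H1 < crossing_index r H3)"
    using extremal_if_crossed_first[OF r, of "{H1, H2, H3}" H1] H assms(8) by auto
  moreover have "\<not> (crossing_index r H2 < crossing_index r H1 \<and> crossing_index r H3 < crossing_index r H1)"
    using extremal_if_crossed_last[OF r, of "{H1, H2, H3}" H1] H assms(8) by auto
  ultimately show ?thesis by linarith
qed

definition same_order :: "'a set list \<Rightarrow> 'a set list \<Rightarrow> 'a set \<Rightarrow> 'a set \<Rightarrow> bool" where
  "same_order r s H H' \<longleftrightarrow>
     (crossing_index r H < crossing_index r H' \<longleftrightarrow> crossing_index s H < crossing_index s H')"

text \<open>Every reduced gallery crosses a pencil of three hyperplanes with the non-extremal one in the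
  middle, so two reduced galleries either agree on all three pairs or disagree on all of them.\<close>
lemma same_order_in_pencil:
  assumes r: "reduced_gallery r" and s: "reduced_gallery s"
    and H: "H1 \<in> A" "H2 \<in> A" "H3 \<in> A" "H1 \<noteq> H2" "H1 \<noteq> H3" "H2 \<noteq> H3"
    and sub: "H1 \<inter> H2 \<subseteq> H3"
  shows "same_order r s H1 H2 \<longleftrightarrow> same_order r s H1 H3"
proof -
  note order = relative_order_with_same_middle[where a = "crossing_index r H1"
      and b = "crossing_index r H2" and c = "crossing_index r H3" and a' = "crossing_index s H1"
      and b' = "crossing_index s H2" and c' = "crossing_index s H3", folded same_order_def]
  consider "\<not> extremal {H1, H2, H3} H1" | "\<not> extremal {H2, H1, H3} H2" | "\<not> extremal {H3, H1, H2} H3"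
    using pencil_not_all_extremal[OF H sub] by blast
  then show ?thesis
  proof cases
    case 1
    show ?thesis using order[OF disjI1[OF conjI[OF nonextremal_crossed_between[OF r H 1]
        nonextremal_crossed_between[OF s H 1]]]] .
  next
    case 2
    have H': "H2 \<in> A" "H1 \<in> A" "H3 \<in> A" "H2 \<noteq> H1" "H2 \<noteq> H3" "H1 \<noteq> H3" using H by auto
    show ?thesis using order[OF disjI2[OF disjI1[OF conjI[OF nonextremal_crossed_between[OF r H' 2]
        nonextremal_crossed_between[OF s H' 2]]]]] .
  next
    case 3
    have H': "H3 \<in> A" "H1 \<in> A" "H2 \<in> A" "H3 \<noteq> H1" "H3 \<noteq> H2" "H1 \<noteq> H2" using H by auto
    show ?thesis using order[OF disjI2[OF disjI2[OF conjI[OF nonextremal_crossed_between[OF r H' 3]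
        nonextremal_crossed_between[OF s H' 3]]]]] .
  qed
qed

lemma same_order_commute:
  assumes "reduced_gallery r" "reduced_gallery s" "H \<in> A" "H' \<in> A" "H \<noteq> H'"
  shows "same_order r s H H' \<longleftrightarrow> same_order r s H' H"
proof -
  have "crossing_index r H \<noteq> crossing_index r H'" "crossing_index s H \<noteq> crossing_index s H'"
    using assms inj_onD[OF crossing_index_inj] by metis+
  then show ?thesis unfolding same_order_def by linarith
qed

lemma same_order_through_flat:
  assumes r: "reduced_gallery r" and s: "reduced_gallery s" and X: "X \<in> L2 A"
    and H: "H \<in> A" "K \<in> A" "L \<in> A" "H \<noteq> K" "H \<noteq> L" and sub: "X \<subseteq> H" "X \<subseteq> K" "X \<subseteq> L"
  shows "same_order r s H K \<longleftrightarrow> same_order r s H L"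
proof (cases "K = L")
  case False
  have "H \<inter> K \<subseteq> L" using L2_eq_Int[OF X H(1,2,4) sub(1,2)] sub(3) by simp
  then show ?thesis using same_order_in_pencil[OF r s H False] by blast
qed simp

lemma same_order_on_flat:
  assumes r: "reduced_gallery r" and s: "reduced_gallery s" and X: "X \<in> L2 A"
    and H: "H \<in> A" "H' \<in> A" "K \<in> A" "K' \<in> A" "H \<noteq> H'" "K \<noteq> K'"
    and sub: "X \<subseteq> H" "X \<subseteq> H'" "X \<subseteq> K" "X \<subseteq> K'"
  shows "same_order r s H H' \<longleftrightarrow> same_order r s K K'"
proof (cases "H = K")
  case False
  have "same_order r s H H' \<longleftrightarrow> same_order r s H K"
    using same_order_through_flat[OF r s X H(1,2,3) H(5) False] sub by blast
  also have "\<dots> \<longleftrightarrow> same_order r s K H"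
    using same_order_commute[OF r s H(1,3) False] .
  also have "\<dots> \<longleftrightarrow> same_order r s K K'"
  proof (cases "H = K'")
    case False
    then show ?thesis using same_order_through_flat[OF r s X H(3,1,4)] H(6) \<open>H \<noteq> K\<close> sub by auto
  qed simp
  finally show ?thesis .
next
  case True
  then show ?thesis using same_order_through_flat[OF r s X H(1,2,4) H(5)] H(6) sub by auto
qed

lemma Int_mem_L2_diff_iff:
  assumes r0: "reduced_gallery r0" and r: "reduced_gallery r" and H: "H \<in> A" "H' \<in> A" "H \<noteq> H'"
  shows "H \<inter> H' \<in> L2_diff A r0 r \<longleftrightarrow> \<not> same_order r0 r H H'"
proof
  assume "H \<inter> H' \<in> L2_diff A r0 r"
  then obtain K K' where K: "K \<in> A" "K' \<in> A" "H \<inter> H' \<subseteq> K" "H \<inter> H' \<subseteq> K'"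
    and order: "crosses_before A r0 K K'" "crosses_before A r K' K"
    by (auto simp: L2_diff_def)
  then have "\<not> same_order r0 r K K'" "K \<noteq> K'"
    using crosses_before_iff[OF r0 K(1,2)] crosses_before_iff[OF r K(2,1)]
    by (auto simp: same_order_def)
  then show "\<not> same_order r0 r H H'"
    using same_order_on_flat[OF r0 r Int_mem_L2[OF H] H(1,2) K(1,2) H(3)] K(3,4) by auto
next
  assume differ: "\<not> same_order r0 r H H'"
  have distinct: "crossing_index r0 H \<noteq> crossing_index r0 H'" "crossing_index r H \<noteq> crossing_index r H'"
    using H inj_onD[OF crossing_index_inj[OF r0]] inj_onD[OF crossing_index_inj[OF r]] by metis+
  show "H \<inter> H' \<in> L2_diff A r0 r"
  proof (cases "crossing_index r0 H < crossing_index r0 H'")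
    case True
    then have "crossing_index r H' < crossing_index r H"
      using differ distinct unfolding same_order_def by linarith
    then have "crosses_before A r0 H H'" "crosses_before A r H' H"
      using True crosses_before_iff[OF r0 H(1,2)] crosses_before_iff[OF r H(2,1)] by simp_all
    then show ?thesis using Int_mem_L2[OF H] H(1,2) unfolding L2_diff_def by blast
  next
    case False
    then have "crossing_index r H < crossing_index r H'" "crossing_index r0 H' < crossing_index r0 H"
      using differ distinct unfolding same_order_def by linarith+
    then have "crosses_before A r0 H' H" "crosses_before A r H H'"
      using crosses_before_iff[OF r0 H(2,1)] crosses_before_iff[OF r H(1,2)] by simp_all
    then show ?thesis using Int_mem_L2[OF H] H(1,2) unfolding L2_diff_def by blast
  qed
qed

lemma reduced_gallery_eq_if_L2_diff_eq:
  assumes r0: "reduced_gallery r0" and r: "reduced_gallery r" and s: "reduced_gallery s"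
    and eq: "L2_diff A r0 r = L2_diff A r0 s"
  shows "r = s"
proof (rule reduced_gallery_eqI[OF r s])
  fix H H' assume H: "H \<in> A" "H' \<in> A"
  show "crossing_index r H < crossing_index r H' \<longleftrightarrow> crossing_index s H < crossing_index s H'"
  proof (cases "H = H'")
    case False
    then have "same_order r0 r H H' \<longleftrightarrow> same_order r0 s H H'"
      using Int_mem_L2_diff_iff[OF r0 r H False] Int_mem_L2_diff_iff[OF r0 s H False] eq by simp
    then show ?thesis unfolding same_order_def by blast
  qed simp
qed

end

theorem proposition2p3:
  fixes A :: "'a::euclidean_space set set" and c0 :: "'a set" and r0 :: "'a set list"
  assumes "central_essential_arrangement A"
    and "c0 \<in> chambers A"
  shows "(\<forall>c\<in>chambers A. \<forall>c'\<in>chambers A. L1 A c0 c = L1 A c0 c' \<longrightarrow> c = c') \<and>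
         (minimal_gallery A c0 (uminus ` c0) r0 \<longrightarrow>
           (\<forall>r r'. minimal_gallery A c0 (uminus ` c0) r \<and> minimal_gallery A c0 (uminus ` c0) r'
              \<and> L2_diff A r0 r = L2_diff A r0 r' \<longrightarrow> r = r'))"
proof -
  interpret based_arrangement A c0
    using assms by unfold_locales (auto simp: central_essential_arrangement_def)
  have "\<forall>c\<in>chambers A. \<forall>c'\<in>chambers A. L1 A c0 c = L1 A c0 c' \<longrightarrow> c = c'"
    using chamber_eq_if_L1_eq[OF assms(2)] by blast
  moreover have "\<forall>r r'. reduced_gallery r \<and> reduced_gallery r' \<and> L2_diff A r0 r = L2_diff A r0 r' \<longrightarrow> r = r'"
    if "reduced_gallery r0"
    using reduced_gallery_eq_if_L2_diff_eq[OF that] by blast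
  ultimately show ?thesis by blast
qed

end
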